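(* Let $X$ be a topological space and let $r:X\to A$ be a retraction onto a subspace $A\subseteq X$. Let $m\in A$ and $l\in X$. Then: (a) If the man has a strategy in $A$ for starting points $m$ (man) and $r(l)$ (lion), then the man has a strategy in $X$ for starting points $m$ (man) and $l$ (lion). (b) If the lion has a strategy in $X$ for starting points $m$ (man) and $l$ (lion), then the lion has a strategy in $A$ for starting points $m$ (man) and $r(l)$ (lion).
   Context: For a topological space $X$ and $x\in X$, let $P_x(X)$ be the set of continuous maps $\gamma:[0,+\infty)\to X$ with $\gamma(0)=x$. For $\gamma\in P_x(X)$ and $t\ge 0$, write $\gamma_{<t}=\gamma|_{[0,t)}$ and $\gamma_{\le t}=\gamma|_{[0,t]}$. Given starting points $m$ (man) and $l$ (lion) in a space $X$: a strategy for the man is a function $S:P_l(X)\to P_m(X)$ such that (i) $S(\beta)(t)\neq\beta(t)$ for all $\beta\in P_l(X)$ and $t\ge0$, and (ii) whenever $\beta,\beta'\in P_l(X)$ and $t\ge0$ satisfy $\beta_{<t}=\beta'_{<t}$, then $S(\beta)_{\le t}=S(\beta')_{\le t}$. A strategy for the lion is a function $S:P_m(X)\to P_l(X)$ such that (i) for each $\alpha\in P_m(X)$ there exists $t\ge 0$ with $S(\alpha)(t)=\alpha(t)$, and (ii) whenever $\alpha,\alpha'\in P_m(X)$ and $t\ge0$ satisfy $\alpha_{<t}=\alpha'_{<t}$, then $S(\alpha)_{\le t}=S(\alpha')_{\le t}$. A retraction $r:X\to A$ is a continuous map with $r(a)=a$ for all $a\in A$. *)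

theory Defs
  imports "HOL-Analysis.Analysis"
begin

text \<open>Paths starting at x: continuous maps [0,+oo) to X with value x at 0.
  Paths are HOL functions real => 'a; only their values on [0,+oo) matter.\<close>
definition paths_from :: "'a topology \<Rightarrow> 'a \<Rightarrow> (real \<Rightarrow> 'a) set" where
  "paths_from X x = {\<gamma>. continuous_map (top_of_set {0..}) X \<gamma> \<and> \<gamma> 0 = x}"

definition man_strategy ::
  "'a topology \<Rightarrow> 'a \<Rightarrow> 'a \<Rightarrow> ((real \<Rightarrow> 'a) \<Rightarrow> (real \<Rightarrow> 'a)) \<Rightarrow> bool" where
  "man_strategy X m l S \<longleftrightarrow>
     (\<forall>\<beta>\<in>paths_from X l. S \<beta> \<in> paths_from X m \<and> (\<forall>t\<ge>0. S \<beta> t \<noteq> \<beta> t)) \<and>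
     (\<forall>\<beta>\<in>paths_from X l. \<forall>\<beta>'\<in>paths_from X l. \<forall>t\<ge>0.
        (\<forall>s\<in>{0..<t}. \<beta> s = \<beta>' s) \<longrightarrow> (\<forall>s\<in>{0..t}. S \<beta> s = S \<beta>' s))"

definition lion_strategy ::
  "'a topology \<Rightarrow> 'a \<Rightarrow> 'a \<Rightarrow> ((real \<Rightarrow> 'a) \<Rightarrow> (real \<Rightarrow> 'a)) \<Rightarrow> bool" where
  "lion_strategy X m l S \<longleftrightarrow>
     (\<forall>\<alpha>\<in>paths_from X m. S \<alpha> \<in> paths_from X l \<and> (\<exists>t\<ge>0. S \<alpha> t = \<alpha> t)) \<and>
     (\<forall>\<alpha>\<in>paths_from X m. \<forall>\<alpha>'\<in>paths_from X m. \<forall>t\<ge>0.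
        (\<forall>s\<in>{0..<t}. \<alpha> s = \<alpha>' s) \<longrightarrow> (\<forall>s\<in>{0..t}. S \<alpha> s = S \<alpha>' s))"

definition man_has_strategy :: "'a topology \<Rightarrow> 'a \<Rightarrow> 'a \<Rightarrow> bool" where
  "man_has_strategy X m l \<longleftrightarrow> (\<exists>S. man_strategy X m l S)"

definition lion_has_strategy :: "'a topology \<Rightarrow> 'a \<Rightarrow> 'a \<Rightarrow> bool" where
  "lion_has_strategy X m l \<longleftrightarrow> (\<exists>S. lion_strategy X m l S)"

end

theory Submission
  imports Defs
begin

text \<open>The man in \<open>X\<close> plays his \<open>A\<close>-strategy against the shadow \<open>r \<circ> \<beta>\<close> of the lion. He stays
  in \<open>A\<close>, where \<open>r\<close> is the identity, so meeting the lion would mean meeting its shadow.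
  Dually, the lion in \<open>A\<close> runs along the shadow \<open>r \<circ> T \<alpha>\<close> of the \<open>X\<close>-lion's path: the capture
  happens at a point of the man's path, which lies in \<open>A\<close> and is therefore fixed by \<open>r\<close>.\<close>

lemma paths_from_subtopology:
  "\<gamma> \<in> paths_from (subtopology X A) x \<longleftrightarrow> \<gamma> \<in> paths_from X x \<and> (\<forall>t\<ge>0. \<gamma> t \<in> A)"
  unfolding paths_from_def continuous_map_in_subtopology by auto

lemma paths_from_compose:
  assumes "continuous_map X Y f" and "\<gamma> \<in> paths_from X x"
  shows "f \<circ> \<gamma> \<in> paths_from Y (f x)"
  using assms unfolding paths_from_def by (auto intro: continuous_map_compose)

lemma man_strategy_retract:
  assumes r: "continuous_map X (subtopology X A) r" and fix_r: "\<And>a. a \<in> A \<Longrightarrow> r a = a"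
    and S: "man_strategy (subtopology X A) m (r l) S"
  shows "man_strategy X m l (\<lambda>\<beta>. S (r \<circ> \<beta>))"
proof -
  have shadow: "r \<circ> \<beta> \<in> paths_from (subtopology X A) (r l)" if "\<beta> \<in> paths_from X l" for \<beta>
    using paths_from_compose[OF r that] .
  have man: "S (r \<circ> \<beta>) \<in> paths_from X m" "\<forall>t\<ge>0. S (r \<circ> \<beta>) t \<in> A"
    and avoids: "\<forall>t\<ge>0. S (r \<circ> \<beta>) t \<noteq> r (\<beta> t)" if "\<beta> \<in> paths_from X l" for \<beta>
  proof -
    have "S (r \<circ> \<beta>) \<in> paths_from (subtopology X A) m \<and> (\<forall>t\<ge>0. S (r \<circ> \<beta>) t \<noteq> (r \<circ> \<beta>) t)"
      using S shadow[OF that] unfolding man_strategy_def by blast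
    then show "S (r \<circ> \<beta>) \<in> paths_from X m" "\<forall>t\<ge>0. S (r \<circ> \<beta>) t \<in> A"
      "\<forall>t\<ge>0. S (r \<circ> \<beta>) t \<noteq> r (\<beta> t)"
      unfolding paths_from_subtopology by auto
  qed
  have "S (r \<circ> \<beta>) t \<noteq> \<beta> t" if "\<beta> \<in> paths_from X l" "t \<ge> 0" for \<beta> t
    by (metis man(2) avoids fix_r that)
  moreover have "S (r \<circ> \<beta>) s = S (r \<circ> \<beta>') s"
    if "\<beta> \<in> paths_from X l" "\<beta>' \<in> paths_from X l" "0 \<le> t"
      and "\<forall>s\<in>{0..<t}. \<beta> s = \<beta>' s" and "s \<in> {0..t}" for \<beta> \<beta>' t s
  proof -
    have "\<forall>s\<in>{0..<t}. (r \<circ> \<beta>) s = (r \<circ> \<beta>') s"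
      using that(4) by simp
    then show ?thesis
      using S shadow[OF that(1)] shadow[OF that(2)] that(3,5) unfolding man_strategy_def by blast
  qed
  ultimately show ?thesis
    using man(1) unfolding man_strategy_def by blast
qed

lemma lion_strategy_retract:
  assumes r: "continuous_map X (subtopology X A) r" and fix_r: "\<And>a. a \<in> A \<Longrightarrow> r a = a"
    and T: "lion_strategy X m l T"
  shows "lion_strategy (subtopology X A) m (r l) (\<lambda>\<alpha>. r \<circ> T \<alpha>)"
  unfolding lion_strategy_def
proof (intro conjI ballI allI impI)
  fix \<alpha> assume "\<alpha> \<in> paths_from (subtopology X A) m"
  then have man: "\<alpha> \<in> paths_from X m" "\<forall>t\<ge>0. \<alpha> t \<in> A"
    unfolding paths_from_subtopology by blast+
  then have "T \<alpha> \<in> paths_from X l" and "\<exists>t\<ge>0. T \<alpha> t = \<alpha> t"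
    using T unfolding lion_strategy_def by blast+
  then show "r \<circ> T \<alpha> \<in> paths_from (subtopology X A) (r l)"
    by (blast intro: paths_from_compose[OF r])
  from \<open>\<exists>t\<ge>0. T \<alpha> t = \<alpha> t\<close> obtain t where "t \<ge> 0" "T \<alpha> t = \<alpha> t"
    by blast
  with man(2) fix_r have "(r \<circ> T \<alpha>) t = \<alpha> t"
    by simp
  with \<open>t \<ge> 0\<close> show "\<exists>t\<ge>0. (r \<circ> T \<alpha>) t = \<alpha> t"
    by blast
next
  fix \<alpha> \<alpha>' t s assume "\<alpha> \<in> paths_from (subtopology X A) m" "\<alpha>' \<in> paths_from (subtopology X A) m"
    and "0 \<le> t" "\<forall>s\<in>{0..<t}. \<alpha> s = \<alpha>' s" "s \<in> {0..t}"
  then have "T \<alpha> s = T \<alpha>' s"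
    using T unfolding lion_strategy_def paths_from_subtopology by blast
  then show "(r \<circ> T \<alpha>) s = (r \<circ> T \<alpha>') s"
    by simp
qed

theorem mainTheorem6:
  fixes X :: "'a topology" and A :: "'a set" and r :: "'a \<Rightarrow> 'a" and m l :: 'a
  assumes "A \<subseteq> topspace X"
    and "continuous_map X (subtopology X A) r"
    and "\<forall>a\<in>A. r a = a"
    and "m \<in> A" and "l \<in> topspace X"
  shows "(man_has_strategy (subtopology X A) m (r l) \<longrightarrow> man_has_strategy X m l) \<and>
         (lion_has_strategy X m l \<longrightarrow> lion_has_strategy (subtopology X A) m (r l))"
proof -
  have fix_r: "\<And>a. a \<in> A \<Longrightarrow> r a = a"
    using assms(3) by blast
  show ?thesis
    unfolding man_has_strategy_def lion_has_strategy_def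
    using man_strategy_retract[OF assms(2) fix_r] lion_strategy_retract[OF assms(2) fix_r]
    by blast
qed

end
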